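(* The pair $(\tau_1,\tau_2)$ on $H^2_{\mathbb D^2}$ does not have any non-trivial joint reducing subspace.
   Context: $H^2_{\mathbb D^2}$ is the Hardy space of the bidisc with orthonormal basis $\{z_1^{m_1}z_2^{m_2}\}_{m_1,m_2\ge0}$; $M_{z_1},M_{z_2}$ are the coordinate multiplication operators. $U$ is the unitary on $H^2_{\mathbb D^2}$ with $U(z_1^{m_1}z_2^{m_2})=z_1^{m_1+2}z_2^{m_2}$ if $m_1\ge m_2$, $=z_1^{m_1+1}z_2^{m_2-1}$ if $m_1+1=m_2$, $=z_1^{m_1}z_2^{m_2-2}$ if $m_1+2\le m_2$; $\tau_1=U^*M_{z_1}$, $\tau_2=M_{z_2}U$. A non-trivial joint reducing subspace is a closed subspace, different from $\{0\}$ and the whole space, reducing both operators. *)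

theory Defs
  imports "HOL-Analysis.Analysis"
begin

text \<open>H^2 of the bidisc, realised via its orthonormal basis z1^m1 z2^m2 as the
space of square-summable coefficient families indexed by nat x nat.\<close>

type_synonym coeffs = "nat \<times> nat \<Rightarrow> complex"

definition H2 :: "coeffs set" where
  "H2 = {f. (\<lambda>k. (cmod (f k))\<^sup>2) summable_on UNIV}"

definition h2_inner :: "coeffs \<Rightarrow> coeffs \<Rightarrow> complex" where
  "h2_inner f g = infsum (\<lambda>k. f k * cnj (g k)) UNIV"

definition h2_norm :: "coeffs \<Rightarrow> real" where
  "h2_norm f = sqrt (infsum (\<lambda>k. (cmod (f k))\<^sup>2) UNIV)"

definition closed_subspace :: "coeffs set \<Rightarrow> bool" where
  "closed_subspace M \<longleftrightarrow> M \<subseteq> H2 \<and> (\<lambda>_. 0) \<in> M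
     \<and> (\<forall>f\<in>M. \<forall>g\<in>M. (\<lambda>k. f k + g k) \<in> M)
     \<and> (\<forall>c::complex. \<forall>f\<in>M. (\<lambda>k. c * f k) \<in> M)
     \<and> (\<forall>x g. (\<forall>n. x n \<in> M) \<and> g \<in> H2 \<and> (\<lambda>n. h2_norm (\<lambda>k. x n k - g k)) \<longlonglongrightarrow> 0 \<longrightarrow> g \<in> M)"

definition is_adjoint :: "(coeffs \<Rightarrow> coeffs) \<Rightarrow> (coeffs \<Rightarrow> coeffs) \<Rightarrow> bool" where
  "is_adjoint T S \<longleftrightarrow> (\<forall>f\<in>H2. S f \<in> H2)
     \<and> (\<forall>f\<in>H2. \<forall>g\<in>H2. h2_inner (T f) g = h2_inner f (S g))"

definition reduces :: "(coeffs \<Rightarrow> coeffs) \<Rightarrow> coeffs set \<Rightarrow> bool" where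
  "reduces T M \<longleftrightarrow> T ` M \<subseteq> M \<and> (\<exists>S. is_adjoint T S \<and> S ` M \<subseteq> M)"

definition Mz1 :: "coeffs \<Rightarrow> coeffs" where
  "Mz1 f = (\<lambda>(m1, m2). if m1 = 0 then 0 else f (m1 - 1, m2))"

definition Mz2 :: "coeffs \<Rightarrow> coeffs" where
  "Mz2 f = (\<lambda>(m1, m2). if m2 = 0 then 0 else f (m1, m2 - 1))"

text \<open>The index map: U (z1^m1 z2^m2) = z1^(fst (sigma (m1,m2))) z2^(snd (sigma (m1,m2))).\<close>
definition sigma :: "nat \<times> nat \<Rightarrow> nat \<times> nat" where
  "sigma = (\<lambda>(m1, m2). if m1 \<ge> m2 then (m1 + 2, m2)
                       else if m1 + 1 = m2 then (m1 + 1, m2 - 1)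
                       else (m1, m2 - 2))"

text \<open>U, the (continuous linear) extension of the basis map e_m \<mapsto> e_(sigma m),
  and its adjoint U*, which sends e_(sigma m) to e_m.\<close>
definition Uop :: "coeffs \<Rightarrow> coeffs" where
  "Uop f = (\<lambda>n. if n \<in> range sigma then f (inv sigma n) else 0)"

definition Uadj :: "coeffs \<Rightarrow> coeffs" where
  "Uadj f = f \<circ> sigma"

definition tau1 :: "coeffs \<Rightarrow> coeffs" where
  "tau1 f = Uadj (Mz1 f)"

definition tau2 :: "coeffs \<Rightarrow> coeffs" where
  "tau2 f = Mz2 (Uop f)"

end

theory Submission
  imports Defs
begin

(* tau1 and tau2 map each basis vector e_k to e_(tau1_idx k), resp. e_(tau2_idx k), for
   injective index maps of N x N, so their adjoints act on coefficients by f |-> f o tau_i_idx.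
   A joint reducing subspace M is therefore invariant under tau_i and under f |-> f o tau_i_idx,
   and the graph on N x N with edges k -- tau_i_idx k is connected. Hence M contains all basis
   vectors (so M = H2) as soon as it contains e_(0,0), and M = 0 as soon as all its elements
   vanish at (0,0). These cases are exhaustive because f(0,0) e_(0,0) lies in M for every f in M:
   I - tau2 tau2* projects onto the row m2 = 0, on which tau1 and tau1* act as the backward and
   the forward shift. *)

definition restrict_coeffs :: "(nat \<times> nat) set \<Rightarrow> coeffs \<Rightarrow> coeffs" where
  "restrict_coeffs A f = (\<lambda>k. if k \<in> A then f k else 0)"

definition h2_basis :: "nat \<times> nat \<Rightarrow> coeffs" where
  "h2_basis k = (\<lambda>j. if j = k then 1 else 0)"

lemma h2_basis_in_H2: "h2_basis k \<in> H2"
proof -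
  have "(\<lambda>j. (cmod (h2_basis k j))\<^sup>2) summable_on UNIV \<longleftrightarrow> (\<lambda>j. (cmod (h2_basis k j))\<^sup>2) summable_on {k}"
    by (rule summable_on_cong_neutral) (auto simp: h2_basis_def)
  then show ?thesis
    by (simp add: H2_def)
qed

lemma h2_inner_basis_left: "h2_inner (h2_basis k) g = cnj (g k)"
proof -
  have "infsum (\<lambda>j. h2_basis k j * cnj (g j)) UNIV = infsum (\<lambda>j. h2_basis k j * cnj (g j)) {k}"
    by (rule infsum_cong_neutral) (auto simp: h2_basis_def)
  then show ?thesis
    by (simp add: h2_inner_def h2_basis_def)
qed

lemma h2_basis_comp_inj:
  assumes "inj \<phi>"
  shows "h2_basis (\<phi> k) \<circ> \<phi> = h2_basis k"
  using assms by (auto simp: h2_basis_def inj_eq)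

lemma infsum_compl_image_lessThan_tendsto_0:
  fixes p :: "'i \<Rightarrow> 'a::banach"
  assumes "bij b" and "p summable_on UNIV"
  shows "(\<lambda>n. infsum p (- b ` {..<n})) \<longlonglongrightarrow> 0"
proof -
  define s where "s = infsum p UNIV"
  have "((\<lambda>i. p (b i)) has_sum s) UNIV"
    using assms has_sum_reindex_bij_betw[of b UNIV UNIV p s] by (simp add: s_def)
  then have partial_sums: "(\<lambda>n. \<Sum>i<n. p (b i)) \<longlonglongrightarrow> s"
    using has_sum_imp_sums unfolding sums_def by blast
  have tail: "infsum p (- b ` {..<n}) = s - (\<Sum>i<n. p (b i))" for n
  proof -
    have "s = infsum p (b ` {..<n} \<union> - b ` {..<n})"
      by (simp add: s_def)
    also have "\<dots> = infsum p (b ` {..<n}) + infsum p (- b ` {..<n})"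
      using assms(2) by (intro infsum_Un_disjoint) (auto intro: summable_on_subset_banach)
    also have "infsum p (b ` {..<n}) = (\<Sum>i<n. p (b i))"
      using bij_is_inj[OF \<open>bij b\<close>] by (simp add: sum.reindex inj_on_def)
    finally show ?thesis
      by (simp add: algebra_simps)
  qed
  have "(\<lambda>n. s - (\<Sum>i<n. p (b i))) \<longlonglongrightarrow> s - s"
    by (intro tendsto_diff tendsto_const partial_sums)
  then show ?thesis
    by (simp add: tail)
qed

lemma closed_subspace_subset_H2: "closed_subspace M \<Longrightarrow> M \<subseteq> H2"
  by (simp add: closed_subspace_def)

lemma closed_subspace_zero: "closed_subspace M \<Longrightarrow> (\<lambda>_. 0) \<in> M"
  by (simp add: closed_subspace_def)

lemma closed_subspace_add: "closed_subspace M \<Longrightarrow> f \<in> M \<Longrightarrow> g \<in> M \<Longrightarrow> (\<lambda>k. f k + g k) \<in> M"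
  by (simp add: closed_subspace_def)

lemma closed_subspace_scale: "closed_subspace M \<Longrightarrow> f \<in> M \<Longrightarrow> (\<lambda>k. c * f k) \<in> M"
  by (simp add: closed_subspace_def)

lemma closed_subspace_diff:
  assumes "closed_subspace M" "f \<in> M" "g \<in> M"
  shows "(\<lambda>k. f k - g k) \<in> M"
  using closed_subspace_add[OF assms(1,2) closed_subspace_scale[OF assms(1,3), of "-1"]] by simp

lemma closed_subspace_limit:
  assumes "closed_subspace M" "\<And>n. x n \<in> M" "g \<in> H2" "(\<lambda>n. h2_norm (\<lambda>k. x n k - g k)) \<longlonglongrightarrow> 0"
  shows "g \<in> M"
  using assms unfolding closed_subspace_def by blast

lemma closed_subspace_restrict_finite:
  assumes "closed_subspace M" "\<And>k. h2_basis k \<in> M" "finite F"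
  shows "restrict_coeffs F g \<in> M"
  using assms(3)
proof (induction F rule: finite_induct)
  case empty
  then show ?case
    using closed_subspace_zero[OF assms(1)] by (simp add: restrict_coeffs_def)
next
  case (insert k F)
  have "(\<lambda>j. restrict_coeffs F g j + g k * h2_basis k j) \<in> M"
    using insert.IH assms(1,2) by (intro closed_subspace_add closed_subspace_scale)
  moreover have "(\<lambda>j. restrict_coeffs F g j + g k * h2_basis k j) = restrict_coeffs (insert k F) g"
    using insert.hyps(2) by (auto simp: restrict_coeffs_def h2_basis_def)
  ultimately show ?case
    by simp
qed

lemma h2_norm_restrict_diff:
  "h2_norm (\<lambda>k. restrict_coeffs F g k - g k) = sqrt (infsum (\<lambda>k. (cmod (g k))\<^sup>2) (- F))"
  unfolding h2_norm_def
  by (rule arg_cong[where f = sqrt], rule infsum_cong_neutral) (auto simp: restrict_coeffs_def)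

lemma closed_subspace_eq_H2_if_basis:
  assumes M: "closed_subspace M" and basis: "\<And>k. h2_basis k \<in> M"
  shows "M = H2"
proof
  show "M \<subseteq> H2"
    using M by (rule closed_subspace_subset_H2)
next
  show "H2 \<subseteq> M"
  proof
    fix g assume g: "g \<in> H2"
    define x where "x n = restrict_coeffs (prod_decode ` {..<n}) g" for n
    have "x n \<in> M" for n
      unfolding x_def using M basis by (rule closed_subspace_restrict_finite) simp
    moreover have "(\<lambda>n. h2_norm (\<lambda>k. x n k - g k)) \<longlonglongrightarrow> 0"
    proof -
      have "(\<lambda>n. infsum (\<lambda>k. (cmod (g k))\<^sup>2) (- prod_decode ` {..<n})) \<longlonglongrightarrow> 0"
        using g bij_prod_decode by (intro infsum_compl_image_lessThan_tendsto_0) (simp_all add: H2_def)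
      then have "(\<lambda>n. sqrt (infsum (\<lambda>k. (cmod (g k))\<^sup>2) (- prod_decode ` {..<n}))) \<longlonglongrightarrow> sqrt 0"
        by (intro tendsto_intros)
      then show ?thesis
        by (simp add: x_def h2_norm_restrict_diff)
    qed
    ultimately show "g \<in> M"
      using closed_subspace_limit[OF M _ g] by blast
  qed
qed

definition basis_shift :: "(coeffs \<Rightarrow> coeffs) \<Rightarrow> (nat \<times> nat \<Rightarrow> nat \<times> nat) \<Rightarrow> bool" where
  "basis_shift T \<phi> \<longleftrightarrow> inj \<phi> \<and> (\<forall>f k. T f (\<phi> k) = f k) \<and> (\<forall>f m. m \<notin> range \<phi> \<longrightarrow> T f m = 0)"

lemma basis_shiftI:
  assumes "inj \<phi>" "\<And>f k. T f (\<phi> k) = f k" "\<And>f m. m \<notin> range \<phi> \<Longrightarrow> T f m = 0"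
  shows "basis_shift T \<phi>"
  using assms by (simp add: basis_shift_def)

lemma basis_shift_apply: "basis_shift T \<phi> \<Longrightarrow> T f (\<phi> k) = f k"
  unfolding basis_shift_def by blast

lemma basis_shift_outside_range: "basis_shift T \<phi> \<Longrightarrow> m \<notin> range \<phi> \<Longrightarrow> T f m = 0"
  unfolding basis_shift_def by blast

lemma basis_shift_comp:
  assumes "basis_shift T \<phi>"
  shows "T (f \<circ> \<phi>) = restrict_coeffs (range \<phi>) f"
proof
  fix m
  show "T (f \<circ> \<phi>) m = restrict_coeffs (range \<phi>) f m"
    using basis_shift_apply[OF assms, of "f \<circ> \<phi>"] basis_shift_outside_range[OF assms]
    by (cases "m \<in> range \<phi>") (auto simp: restrict_coeffs_def)
qed

lemma basis_shift_h2_basis: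
  assumes "basis_shift T \<phi>"
  shows "T (h2_basis k) = h2_basis (\<phi> k)"
proof -
  have "T (h2_basis k) = T (h2_basis (\<phi> k) \<circ> \<phi>)"
    using assms by (simp add: basis_shift_def h2_basis_comp_inj)
  also have "\<dots> = restrict_coeffs (range \<phi>) (h2_basis (\<phi> k))"
    using assms by (rule basis_shift_comp)
  also have "\<dots> = h2_basis (\<phi> k)"
    by (auto simp: restrict_coeffs_def h2_basis_def)
  finally show ?thesis .
qed

lemma basis_shift_adjoint:
  assumes "basis_shift T \<phi>" "is_adjoint T S" "g \<in> H2"
  shows "S g = g \<circ> \<phi>"
proof
  fix k
  have "h2_inner (T (h2_basis k)) g = h2_inner (h2_basis k) (S g)"
    using assms(2,3) h2_basis_in_H2 by (simp add: is_adjoint_def)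
  then have "cnj (g (\<phi> k)) = cnj (S g k)"
    by (simp add: basis_shift_h2_basis[OF assms(1)] h2_inner_basis_left)
  then show "S g k = (g \<circ> \<phi>) k"
    by simp
qed

lemma reduces_imp_mem: "reduces T M \<Longrightarrow> f \<in> M \<Longrightarrow> T f \<in> M"
  unfolding reduces_def by blast

lemma reduces_basis_shift_comp:
  assumes "basis_shift T \<phi>" "reduces T M" "M \<subseteq> H2" "f \<in> M"
  shows "f \<circ> \<phi> \<in> M"
proof -
  obtain S where S: "is_adjoint T S" "S ` M \<subseteq> M"
    using assms(2) unfolding reduces_def by blast
  have "S f = f \<circ> \<phi>"
    using basis_shift_adjoint[OF assms(1) S(1)] assms(3,4) by blast
  moreover have "S f \<in> M"
    using S(2) assms(4) by blast
  ultimately show ?thesis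
    by simp
qed

lemma reduces_basis_shift_vanishing_iff:
  assumes "basis_shift T \<phi>" "reduces T M" "M \<subseteq> H2"
  shows "(\<forall>f\<in>M. f (\<phi> k) = 0) \<longleftrightarrow> (\<forall>f\<in>M. f k = 0)"
proof (intro iffI ballI)
  fix f
  assume "\<forall>f\<in>M. f (\<phi> k) = 0" and "f \<in> M"
  then have "T f (\<phi> k) = 0"
    using reduces_imp_mem[OF assms(2)] by blast
  then show "f k = 0"
    by (simp add: basis_shift_apply[OF assms(1)])
next
  fix f
  assume "\<forall>f\<in>M. f k = 0" and "f \<in> M"
  then have "(f \<circ> \<phi>) k = 0"
    using reduces_basis_shift_comp[OF assms] by blast
  then show "f (\<phi> k) = 0"
    by simp
qed

lemma reduces_basis_shift_h2_basis_iff: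
  assumes "basis_shift T \<phi>" "reduces T M" "M \<subseteq> H2"
  shows "h2_basis (\<phi> k) \<in> M \<longleftrightarrow> h2_basis k \<in> M"
proof
  assume "h2_basis (\<phi> k) \<in> M"
  then have "h2_basis (\<phi> k) \<circ> \<phi> \<in> M"
    by (rule reduces_basis_shift_comp[OF assms])
  then show "h2_basis k \<in> M"
    using assms(1) by (simp add: basis_shift_def h2_basis_comp_inj)
next
  assume "h2_basis k \<in> M"
  then have "T (h2_basis k) \<in> M"
    by (rule reduces_imp_mem[OF assms(2)])
  then show "h2_basis (\<phi> k) \<in> M"
    by (simp add: basis_shift_h2_basis[OF assms(1)])
qed

definition sigma_inv :: "nat \<times> nat \<Rightarrow> nat \<times> nat" where
  "sigma_inv = (\<lambda>(a, b). if a \<ge> b + 2 then (a - 2, b) else if a = b + 1 then (b, b + 1) else (a, b + 2))"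

lemma sigma_sigma_inv [simp]: "sigma (sigma_inv n) = n"
  by (cases n) (auto simp: sigma_def sigma_inv_def)

lemma sigma_inv_sigma [simp]: "sigma_inv (sigma m) = m"
  by (cases m) (auto simp: sigma_def sigma_inv_def)

lemma Uop_eq_comp_sigma_inv: "Uop f = f \<circ> sigma_inv"
proof -
  have "range sigma = UNIV"
    by (metis sigma_sigma_inv surjI)
  moreover have "inv sigma = sigma_inv"
    by (metis inv_equality sigma_inv_sigma sigma_sigma_inv)
  ultimately show ?thesis
    by (simp add: Uop_def comp_def)
qed

lemma tau1_apply:
  "tau1 f m = (if fst (sigma m) = 0 then 0 else f (fst (sigma m) - 1, snd (sigma m)))"
  by (simp add: tau1_def Uadj_def Mz1_def split: prod.splits)

lemma tau2_apply: "tau2 f n = (if snd n = 0 then 0 else f (sigma_inv (fst n, snd n - 1)))"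
  by (simp add: tau2_def Uop_eq_comp_sigma_inv Mz2_def split: prod.splits)

definition tau1_idx :: "nat \<times> nat \<Rightarrow> nat \<times> nat" where
  "tau1_idx k = sigma_inv (fst k + 1, snd k)"

definition tau2_idx :: "nat \<times> nat \<Rightarrow> nat \<times> nat" where
  "tau2_idx k = (fst (sigma k), snd (sigma k) + 1)"

lemma basis_shift_tau1: "basis_shift tau1 tau1_idx"
proof (rule basis_shiftI)
  show "inj tau1_idx"
  proof (rule injI)
    fix x y
    assume "tau1_idx x = tau1_idx y"
    then have "sigma (tau1_idx x) = sigma (tau1_idx y)"
      by simp
    then show "x = y"
      by (simp add: tau1_idx_def prod_eq_iff)
  qed
  show "tau1 f (tau1_idx k) = f k" for f k
    by (simp add: tau1_apply tau1_idx_def)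
  show "tau1 f m = 0" if "m \<notin> range tau1_idx" for f m
  proof -
    have "m = tau1_idx (fst (sigma m) - 1, snd (sigma m))" if "fst (sigma m) \<noteq> 0"
      using that by (simp add: tau1_idx_def)
    then show ?thesis
      using \<open>m \<notin> range tau1_idx\<close> by (auto simp: tau1_apply)
  qed
qed

lemma range_tau2_idx: "range tau2_idx = {n. snd n \<noteq> 0}"
proof (intro subset_antisym subsetI)
  show "n \<in> {n. snd n \<noteq> 0}" if "n \<in> range tau2_idx" for n
    using that by (auto simp: tau2_idx_def)
  show "n \<in> range tau2_idx" if "n \<in> {n. snd n \<noteq> 0}" for n
  proof
    show "n = tau2_idx (sigma_inv (fst n, snd n - 1))"
      using that by (simp add: tau2_idx_def)
  qed simp
qed

lemma basis_shift_tau2: "basis_shift tau2 tau2_idx"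
proof (rule basis_shiftI)
  show "inj tau2_idx"
  proof (rule injI)
    fix x y
    assume "tau2_idx x = tau2_idx y"
    then have "sigma x = sigma y"
      by (simp add: tau2_idx_def prod_eq_iff)
    then show "x = y"
      by (metis sigma_inv_sigma)
  qed
  show "tau2 f (tau2_idx k) = f k" for f k
    by (simp add: tau2_apply tau2_idx_def)
  show "tau2 f m = 0" if "m \<notin> range tau2_idx" for f m
    using that by (simp add: tau2_apply range_tau2_idx)
qed

lemma tau_idx_connected:
  assumes origin: "(0, 0) \<in> Z"
    and tau1_idx_iff: "\<And>k. tau1_idx k \<in> Z \<longleftrightarrow> k \<in> Z"
    and tau2_idx_iff: "\<And>k. tau2_idx k \<in> Z \<longleftrightarrow> k \<in> Z"
  shows "Z = UNIV"
proof -
  \<comment> \<open>(b, b) is linked to (b + 1, b + 1) through tau2_idx (b, b) = (b + 2, b + 1); from the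
    diagonal, tau1_idx moves left along rows below it and tau2_idx moves down columns above it.\<close>
  have diagonal: "(b, b) \<in> Z" for b
  proof (induction b)
    case 0
    show ?case using origin .
  next
    case (Suc b)
    have "tau1_idx (tau2_idx (b, b)) = (Suc b, Suc b)"
      by (simp add: tau1_idx_def tau2_idx_def sigma_def sigma_inv_def)
    then show ?case
      using Suc tau1_idx_iff tau2_idx_iff by metis
  qed
  have below_diagonal: "(b + d, b) \<in> Z" for b d
  proof (induction d)
    case 0
    show ?case using diagonal by simp
  next
    case (Suc d)
    have "tau1_idx (b + Suc d, b) = (b + d, b)"
      by (simp add: tau1_idx_def sigma_inv_def)
    then show ?case
      using Suc tau1_idx_iff by metis
  qed
  have above_diagonal: "(a, a + Suc d) \<in> Z" for a d
  proof (induction d)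
    case 0
    have "tau1_idx (a, a) = (a, a + Suc 0)"
      by (simp add: tau1_idx_def sigma_inv_def)
    then show ?case
      using diagonal tau1_idx_iff by metis
  next
    case (Suc d)
    have "tau2_idx (a, a + Suc (Suc d)) = (a, a + Suc d)"
      by (simp add: tau2_idx_def sigma_def)
    then show ?case
      using Suc tau2_idx_iff by metis
  qed
  have "(a, b) \<in> Z" for a b
  proof (cases "b \<le> a")
    case True
    then show ?thesis
      using below_diagonal[of b "a - b"] by simp
  next
    case False
    then show ?thesis
      using above_diagonal[of a "b - a - 1"] by simp
  qed
  then show ?thesis
    by auto
qed

locale joint_reducing =
  fixes M :: "coeffs set"
  assumes closed_subspace: "closed_subspace M"
    and reduces_tau1: "reduces tau1 M"
    and reduces_tau2: "reduces tau2 M"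
begin

lemma subset_H2: "M \<subseteq> H2"
  using closed_subspace by (rule closed_subspace_subset_H2)

lemma tau1_mem: "f \<in> M \<Longrightarrow> tau1 f \<in> M"
  by (rule reduces_imp_mem[OF reduces_tau1])

lemma comp_tau1_idx_mem: "f \<in> M \<Longrightarrow> f \<circ> tau1_idx \<in> M"
  by (rule reduces_basis_shift_comp[OF basis_shift_tau1 reduces_tau1 subset_H2])

lemma tau2_mem: "f \<in> M \<Longrightarrow> tau2 f \<in> M"
  by (rule reduces_imp_mem[OF reduces_tau2])

lemma comp_tau2_idx_mem: "f \<in> M \<Longrightarrow> f \<circ> tau2_idx \<in> M"
  by (rule reduces_basis_shift_comp[OF basis_shift_tau2 reduces_tau2 subset_H2])

lemma restrict_first_row_mem:
  assumes f: "f \<in> M"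
  shows "restrict_coeffs {n. snd n = 0} f \<in> M"
proof -
  \<comment> \<open>tau2 tau2* is the projection onto the range of tau2_idx, i.e. onto the rows m2 \<ge> 1.\<close>
  have "tau2 (f \<circ> tau2_idx) = restrict_coeffs {n. snd n \<noteq> 0} f"
    using basis_shift_comp[OF basis_shift_tau2] by (simp add: range_tau2_idx)
  then have "(\<lambda>k. f k - restrict_coeffs {n. snd n \<noteq> 0} f k) \<in> M"
    using closed_subspace_diff[OF closed_subspace f tau2_mem[OF comp_tau2_idx_mem[OF f]]] by simp
  moreover have "(\<lambda>k. f k - restrict_coeffs {n. snd n \<noteq> 0} f k) = restrict_coeffs {n. snd n = 0} f"
    by (auto simp: restrict_coeffs_def)
  ultimately show ?thesis
    by simp
qed

lemma restrict_origin_mem: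
  assumes f: "f \<in> M"
  shows "restrict_coeffs {(0, 0)} f \<in> M"
proof -
  define g where "g = restrict_coeffs {n. snd n = 0} f"
  have g: "g \<in> M"
    unfolding g_def using f by (rule restrict_first_row_mem)
  \<comment> \<open>On the row m2 = 0, tau1 acts as the backward shift (a + 1, 0) \<mapsto> (a, 0) and f \<mapsto> f \<circ> tau1_idx
    as the forward shift; their product leaves out exactly the coefficient at the origin.\<close>
  have "restrict_coeffs {n. snd n = 0} (tau1 g) \<circ> tau1_idx
      = restrict_coeffs {n. snd n = 0 \<and> fst n \<noteq> 0} f"
  proof
    fix k
    have "snd (tau1_idx k) = 0 \<longleftrightarrow> snd k = 0 \<and> fst k \<noteq> 0"
      by (cases k) (auto simp: tau1_idx_def sigma_inv_def)
    then show "(restrict_coeffs {n. snd n = 0} (tau1 g) \<circ> tau1_idx) k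
        = restrict_coeffs {n. snd n = 0 \<and> fst n \<noteq> 0} f k"
      using basis_shift_apply[OF basis_shift_tau1] by (simp add: restrict_coeffs_def g_def)
  qed
  moreover have "restrict_coeffs {n. snd n = 0} (tau1 g) \<circ> tau1_idx \<in> M"
    using g by (intro comp_tau1_idx_mem restrict_first_row_mem tau1_mem)
  ultimately have "(\<lambda>k. g k - restrict_coeffs {n. snd n = 0 \<and> fst n \<noteq> 0} f k) \<in> M"
    using closed_subspace_diff[OF closed_subspace g] by simp
  moreover have "(\<lambda>k. g k - restrict_coeffs {n. snd n = 0 \<and> fst n \<noteq> 0} f k) = restrict_coeffs {(0, 0)} f"
    by (auto simp: g_def restrict_coeffs_def)
  ultimately show ?thesis
    by simp
qed

lemma eq_zero_if_vanishing_at_origin: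
  assumes "\<forall>f\<in>M. f (0, 0) = 0"
  shows "M = {\<lambda>_. 0}"
proof -
  have "{k. \<forall>f\<in>M. f k = 0} = UNIV"
    using assms reduces_basis_shift_vanishing_iff[OF basis_shift_tau1 reduces_tau1 subset_H2]
      reduces_basis_shift_vanishing_iff[OF basis_shift_tau2 reduces_tau2 subset_H2]
    by (intro tau_idx_connected) auto
  then have "f = (\<lambda>_. 0)" if "f \<in> M" for f
    using that by (auto simp: fun_eq_iff)
  then show ?thesis
    using closed_subspace_zero[OF closed_subspace] by blast
qed

lemma eq_H2_if_origin_basis_mem:
  assumes "h2_basis (0, 0) \<in> M"
  shows "M = H2"
proof -
  have "{k. h2_basis k \<in> M} = UNIV"
    using assms reduces_basis_shift_h2_basis_iff[OF basis_shift_tau1 reduces_tau1 subset_H2]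
      reduces_basis_shift_h2_basis_iff[OF basis_shift_tau2 reduces_tau2 subset_H2]
    by (intro tau_idx_connected) auto
  then show ?thesis
    using closed_subspace_eq_H2_if_basis[OF closed_subspace] by blast
qed

lemma eq_zero_or_eq_H2: "M = {\<lambda>_. 0} \<or> M = H2"
proof (cases "\<forall>f\<in>M. f (0, 0) = 0")
  case True
  then show ?thesis
    using eq_zero_if_vanishing_at_origin by blast
next
  case False
  then obtain f where f: "f \<in> M" "f (0, 0) \<noteq> 0"
    by blast
  have "(\<lambda>k. inverse (f (0, 0)) * restrict_coeffs {(0, 0)} f k) \<in> M"
    using closed_subspace restrict_origin_mem[OF f(1)] by (rule closed_subspace_scale)
  moreover have "(\<lambda>k. inverse (f (0, 0)) * restrict_coeffs {(0, 0)} f k) = h2_basis (0, 0)"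
    using f(2) by (auto simp: restrict_coeffs_def h2_basis_def)
  ultimately show ?thesis
    using eq_H2_if_origin_basis_mem by simp
qed

end

theorem lemma3p9:
  shows "\<not> (\<exists>M. closed_subspace M \<and> M \<noteq> {\<lambda>_. 0} \<and> M \<noteq> H2
              \<and> reduces tau1 M \<and> reduces tau2 M)"
proof
  assume "\<exists>M. closed_subspace M \<and> M \<noteq> {\<lambda>_. 0} \<and> M \<noteq> H2 \<and> reduces tau1 M \<and> reduces tau2 M"
  then obtain M where "joint_reducing M" "M \<noteq> {\<lambda>_. 0}" "M \<noteq> H2"
    by (auto simp: joint_reducing_def)
  then show False
    using joint_reducing.eq_zero_or_eq_H2 by blast
qed

end
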